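(* Let $m\geq2$. Then a graph $G$ is minor maximal amongst graphs with $n$ vertices, at most $m$ parallel edges between any given pair of vertices, and spectator floor $n-1$, if and only if $G$ is an $m$-saturated crowded $1$-parade, i.e., every pair of its $n$ vertices is joined by exactly $m$ edges.
   Context: All graphs are finite, have at least one vertex, have no loops, and may have multiple (parallel) edges. A minor of $H$ is any graph obtained from $H$ by a sequence of: deleting an isolated vertex, deleting an edge, contracting an edge that has no edge parallel to it. A graph $G$ in a class $\mathcal{C}$ is minor maximal in $\mathcal{C}$ if no graph in $\mathcal{C}$ other than $G$ has $G$ as a minor. An $m$-saturated crowded $1$-parade is a graph in which every pair of vertices is joined by exactly $m$ edges. A unique shortest path is a shortest $u$–$v$ path $P$ such that every $u$–$v$ path with the same number of vertices is identical to $P$, where two paths with different edge sequences are different even if their vertex sequences agree; a single vertex is a unique shortest path. The parade number $\mathrm{usp}(G)$ is the largest number of vertices of a unique shortest path in $G$. The spectator number is $\mathrm{sp}(G)=|V(G)|-\mathrm{usp}(G)$. The spectator floor $\lfloor \mathrm{sp}\rfloor(G)$ is the minimum of $\mathrm{sp}(H)$ over all graphs $H$ of which $G$ is a minor. *)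

theory Defs
  imports Main
begin

text \<open>Finite loopless multigraphs, represented (up to isomorphism) by a vertex set
and an edge-multiplicity function: mult u v = number of parallel edges joining u and v.\<close>

record mgraph =
  verts :: "nat set"
  mult :: "nat \<Rightarrow> nat \<Rightarrow> nat"

definition wf_graph :: "mgraph \<Rightarrow> bool" where
  "wf_graph G \<longleftrightarrow> finite (verts G) \<and> verts G \<noteq> {} \<and>
     (\<forall>u v. mult G u v = mult G v u) \<and> (\<forall>u. mult G u u = 0) \<and>
     (\<forall>u v. mult G u v > 0 \<longrightarrow> u \<in> verts G \<and> v \<in> verts G)"

definition iso :: "mgraph \<Rightarrow> mgraph \<Rightarrow> bool" where
  "iso G H \<longleftrightarrow> (\<exists>f. bij_betw f (verts G) (verts H) \<and>
     (\<forall>x\<in>verts G. \<forall>y\<in>verts G. mult H (f x) (f y) = mult G x y))"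

definition contract :: "mgraph \<Rightarrow> nat \<Rightarrow> nat \<Rightarrow> mgraph" where
  "contract G u v = \<lparr> verts = verts G - {v},
     mult = (\<lambda>x y. if x = v \<or> y = v \<or> x = y then 0
                   else mult G x y + (if x = u then mult G v y else 0)
                                   + (if y = u then mult G x v else 0)) \<rparr>"

inductive minor_step :: "mgraph \<Rightarrow> mgraph \<Rightarrow> bool" where
  del_vertex: "\<lbrakk> v \<in> verts G; \<forall>w. mult G v w = 0; verts G - {v} \<noteq> {} \<rbrakk>
     \<Longrightarrow> minor_step G \<lparr> verts = verts G - {v}, mult = mult G \<rparr>"
| del_edge: "\<lbrakk> mult G u v > 0 \<rbrakk>
     \<Longrightarrow> minor_step G \<lparr> verts = verts G,
           mult = (\<lambda>x y. if (x = u \<and> y = v) \<or> (x = v \<and> y = u) then mult G x y - 1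
                          else mult G x y) \<rparr>"
| contr_edge: "\<lbrakk> mult G u v = 1 \<rbrakk> \<Longrightarrow> minor_step G (contract G u v)"

definition is_minor :: "mgraph \<Rightarrow> mgraph \<Rightarrow> bool" where
  "is_minor G H \<longleftrightarrow> (\<exists>G'. minor_step\<^sup>*\<^sup>* H G' \<and> iso G' G)"

definition is_path :: "mgraph \<Rightarrow> nat list \<Rightarrow> bool" where
  "is_path G p \<longleftrightarrow> p \<noteq> [] \<and> distinct p \<and> set p \<subseteq> verts G \<and>
     (\<forall>i. Suc i < length p \<longrightarrow> mult G (p ! i) (p ! Suc i) > 0)"

text \<open>A unique shortest path: shortest among paths with the same ends, the only
vertex sequence of that length between these ends, and every consecutive pair
joined by exactly one edge (so the edge sequence is also unique).\<close>
definition usp_path :: "mgraph \<Rightarrow> nat list \<Rightarrow> bool" where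
  "usp_path G p \<longleftrightarrow> is_path G p \<and>
     (\<forall>q. is_path G q \<and> hd q = hd p \<and> last q = last p \<longrightarrow> length p \<le> length q) \<and>
     (\<forall>q. is_path G q \<and> hd q = hd p \<and> last q = last p \<and> length q = length p \<longrightarrow> q = p) \<and>
     (\<forall>i. Suc i < length p \<longrightarrow> mult G (p ! i) (p ! Suc i) = 1)"

definition usp :: "mgraph \<Rightarrow> nat" where
  "usp G = Max (length ` {p. usp_path G p})"

definition sp :: "mgraph \<Rightarrow> nat" where
  "sp G = card (verts G) - usp G"

definition sp_floor :: "mgraph \<Rightarrow> nat" where
  "sp_floor G = (LEAST k. \<exists>H. wf_graph H \<and> is_minor G H \<and> sp H = k)"

definition in_class :: "nat \<Rightarrow> nat \<Rightarrow> mgraph \<Rightarrow> bool" where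
  "in_class n m G \<longleftrightarrow> wf_graph G \<and> card (verts G) = n \<and>
     (\<forall>u v. mult G u v \<le> m) \<and> sp_floor G = n - 1"

definition minor_maximal :: "nat \<Rightarrow> nat \<Rightarrow> mgraph \<Rightarrow> bool" where
  "minor_maximal n m G \<longleftrightarrow> in_class n m G \<and>
     (\<forall>H. in_class n m H \<and> is_minor G H \<longrightarrow> iso H G)"

definition saturated_parade :: "nat \<Rightarrow> mgraph \<Rightarrow> bool" where
  "saturated_parade m G \<longleftrightarrow>
     (\<forall>u\<in>verts G. \<forall>v\<in>verts G. u \<noteq> v \<longrightarrow> mult G u v = m)"

end

theory Submission
  imports Defs
begin

(* A unique shortest path P of a graph H has no chords (a chord would shorten it) and only
   simple edges, so its vertices induce a linear forest. Deleting a vertex or an edge keeps a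
   linear forest, and so does contracting a simple edge uv: if both ends lie in the forest they
   are consecutive, hence have no common neighbour there, and merge into one forest vertex
   without creating parallel edges; otherwise u is dropped from the forest, which is paid for
   by the disappearance of v. So every minor of H carries a linear forest missing at most
   |H| - |P| = sp H vertices. In an m-saturated parade with m >= 2 a linear forest has at most
   one vertex, hence sp H >= n - 1 whenever the parade is a minor of H, and the parade has
   spectator floor n - 1.
   Every graph of the class arises from the parade on its vertex set by deleting edges, so a
   minor-maximal graph is a parade. Conversely, a graph of the class having a parade as a minor
   has as many vertices as the parade, so only edges were deleted, and the bound m on the
   multiplicities leaves nothing to delete. *)

lemma wf_graph_minor_step:
  assumes "minor_step G H" and "wf_graph G"
  shows "wf_graph H"
  using assms
proof (induction rule: minor_step.induct)
  case (del_vertex v G)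
  have "mult G x y = 0" if "x = v \<or> y = v" for x y
    using del_vertex(2) del_vertex(4) that unfolding wf_graph_def by metis
  then have "x \<noteq> v" "y \<noteq> v" if "mult G x y > 0" for x y
    using that by fastforce+
  with del_vertex show ?case unfolding wf_graph_def by auto
next
  case (del_edge G u v)
  let ?M = "\<lambda>x y. if (x = u \<and> y = v) \<or> (x = v \<and> y = u) then mult G x y - 1 else mult G x y"
  have "?M x y > 0 \<Longrightarrow> mult G x y > 0" for x y by (auto split: if_splits)
  moreover have "u \<in> verts G" "v \<in> verts G" using del_edge unfolding wf_graph_def by blast+
  ultimately show ?case using del_edge unfolding wf_graph_def by auto
next
  case (contr_edge G u v)
  then have "u \<noteq> v" "u \<in> verts G" "v \<in> verts G"
    unfolding wf_graph_def by (metis zero_neq_one, metis zero_less_one, metis zero_less_one)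
  with contr_edge(2) show ?case
    unfolding wf_graph_def contract_def by (auto split: if_splits)
qed

lemma wf_graph_minor_steps:
  "minor_step\<^sup>*\<^sup>* G H \<Longrightarrow> wf_graph G \<Longrightarrow> wf_graph H"
  by (induction rule: rtranclp_induct) (auto intro: wf_graph_minor_step)

lemma verts_minor_steps_subset:
  "minor_step\<^sup>*\<^sup>* G H \<Longrightarrow> verts H \<subseteq> verts G"
proof (induction rule: rtranclp_induct)
  case (step H H')
  from step(2) have "verts H' \<subseteq> verts H"
    by cases (auto simp: contract_def)
  with step(3) show ?case by blast
qed simp

lemma mult_minor_steps_le:
  assumes "minor_step\<^sup>*\<^sup>* G H" and "wf_graph G" and "verts H = verts G"
  shows "mult H x y \<le> mult G x y"
  using assms
proof (induction arbitrary: x y rule: rtranclp_induct)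
  case (step H H')
  have "verts H' \<subseteq> verts H" "verts H \<subseteq> verts G"
    using step(1,2) verts_minor_steps_subset r_into_rtranclp by blast+
  then have same: "verts H' = verts H" "verts H = verts G" using step(5) by auto
  have wf: "wf_graph H" using step(1,4) by (rule wf_graph_minor_steps)
  from step(2) have "mult H' x y \<le> mult H x y"
  proof cases
    case (contr_edge u v)
    then have "v \<in> verts H" using wf unfolding wf_graph_def by (metis zero_less_one)
    moreover have "verts H' = verts H - {v}" using contr_edge by (simp add: contract_def)
    ultimately have False using same(1) by blast
    then show ?thesis ..
  qed auto
  also have "mult H x y \<le> mult G x y" using step(3,4) same(2) by blast
  finally show ?case .
qed simp

lemma usp_path_singleton:
  assumes "v \<in> verts G"
  shows "usp_path G [v]"
  using assms unfolding usp_path_def is_path_def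
  by (auto simp: Suc_le_eq length_Suc_conv)

lemma finite_usp_paths:
  assumes "wf_graph G"
  shows "finite {p. usp_path G p}"
proof (rule finite_subset)
  have fin: "finite (verts G)" using assms unfolding wf_graph_def by simp
  show "{p. usp_path G p} \<subseteq> {xs. set xs \<subseteq> verts G \<and> length xs \<le> card (verts G)}"
  proof safe
    fix p assume "usp_path G p"
    then have "distinct p" and sub: "set p \<subseteq> verts G" unfolding usp_path_def is_path_def by auto
    then show "length p \<le> card (verts G)" using card_mono[OF fin sub] by (simp add: distinct_card)
    show "x \<in> verts G" if "x \<in> set p" for x using sub that by blast
  qed
  show "finite {xs. set xs \<subseteq> verts G \<and> length xs \<le> card (verts G)}"
    using fin by (rule finite_lists_length_le)
qed

lemma usp_attained:
  assumes "wf_graph G"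
  obtains p where "usp_path G p" and "usp G = length p"
proof -
  obtain v where "v \<in> verts G" using assms unfolding wf_graph_def by blast
  then have "length ` {p. usp_path G p} \<noteq> {}" using usp_path_singleton by blast
  from Max_in[OF _ this] show ?thesis
    using finite_usp_paths[OF assms] that unfolding usp_def by auto
qed

lemma sp_le_card_verts_minus_1:
  assumes "wf_graph G"
  shows "sp G \<le> card (verts G) - 1"
proof -
  obtain p where "usp_path G p" "usp G = length p" using usp_attained[OF assms] .
  then have "usp G \<ge> 1" unfolding usp_path_def is_path_def by (simp add: Suc_le_eq)
  then show ?thesis unfolding sp_def by simp
qed

lemma is_path_shortcut:
  assumes p: "is_path G P" and ij: "Suc i < j" "j < length P" and e: "mult G (P!i) (P!j) > 0"
  defines "q \<equiv> take (Suc i) P @ drop j P"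
  shows "is_path G q" and "hd q = hd P" and "last q = last P" and "length q < length P"
proof -
  have d: "distinct P" "set P \<subseteq> verts G" and adj: "\<And>k. Suc k < length P \<Longrightarrow> mult G (P!k) (P!Suc k) > 0"
    using p unfolding is_path_def by auto
  have nth_q: "q ! k = (if k \<le> i then P ! k else P ! (j + (k - Suc i)))" if "k < length q" for k
    using that ij by (auto simp: q_def nth_append)
  have "mult G (q!k) (q!Suc k) > 0" if k: "Suc k < length q" for k
  proof -
    consider "k < i" | "k = i" | "k > i" by linarith
    then show ?thesis
    proof cases
      case 1
      then show ?thesis using nth_q[of k] nth_q[of "Suc k"] k adj[of k] ij by simp
    next
      case 2
      then show ?thesis using nth_q[of k] nth_q[of "Suc k"] k e by simp
    next
      case 3
      then have "Suc (j + (k - Suc i)) < length P" and "j + (Suc k - Suc i) = Suc (j + (k - Suc i))"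
        using k ij by (simp_all add: q_def)
      then show ?thesis using nth_q[of k] nth_q[of "Suc k"] k 3 adj by simp
    qed
  qed
  moreover have "distinct q"
    using d(1) ij set_take_disj_set_drop_if_distinct[OF d(1), of "Suc i" j] by (simp add: q_def)
  moreover have "set q \<subseteq> verts G"
    using d(2) set_take_subset[of "Suc i" P] set_drop_subset[of j P] by (auto simp: q_def)
  moreover have "q \<noteq> []" using ij by (simp add: q_def)
  ultimately show "is_path G q" unfolding is_path_def by blast
  show "hd q = hd P" using ij by (simp add: q_def hd_append hd_conv_nth)
  show "last q = last P" using ij by (simp add: q_def last_drop)
  show "length q < length P" using ij by (simp add: q_def)
qed

lemma usp_path_chordless:
  assumes "usp_path G P" and "Suc i < j" and "j < length P"
  shows "mult G (P!i) (P!j) = 0"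
proof (rule ccontr)
  assume "mult G (P!i) (P!j) \<noteq> 0"
  then have "mult G (P!i) (P!j) > 0" by simp
  from is_path_shortcut[OF _ assms(2,3) this] assms(1) show False
    unfolding usp_path_def by (meson leD)
qed

definition consecutive :: "nat set \<Rightarrow> (nat \<Rightarrow> nat) \<Rightarrow> nat \<Rightarrow> nat \<Rightarrow> bool" where
  "consecutive Q pos x y \<longleftrightarrow>
     (\<forall>z\<in>Q. \<not> (pos x < pos z \<and> pos z < pos y) \<and> \<not> (pos y < pos z \<and> pos z < pos x))"

text \<open>Ordering Q by pos, the edges inside Q are simple and join neighbours in this order:
Q induces a linear forest.\<close>
definition linear_forest :: "mgraph \<Rightarrow> nat set \<Rightarrow> (nat \<Rightarrow> nat) \<Rightarrow> bool" where
  "linear_forest G Q pos \<longleftrightarrow> Q \<subseteq> verts G \<and> inj_on pos Q \<and>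
     (\<forall>x\<in>Q. \<forall>y\<in>Q. mult G x y \<le> 1 \<and> (mult G x y > 0 \<longrightarrow> consecutive Q pos x y))"

lemma consecutive_subset: "consecutive Q pos x y \<Longrightarrow> Q' \<subseteq> Q \<Longrightarrow> consecutive Q' pos x y"
  unfolding consecutive_def by blast

lemma consecutive_sym: "consecutive Q pos x y \<Longrightarrow> consecutive Q pos y x"
  unfolding consecutive_def by blast

lemma consecutive_no_triangle:
  assumes "a \<in> Q" "b \<in> Q" "c \<in> Q" "a \<noteq> b" "b \<noteq> c" "a \<noteq> c" "inj_on pos Q"
    and "consecutive Q pos a b" "consecutive Q pos b c" "consecutive Q pos a c"
  shows False
proof -
  have "pos a \<noteq> pos b" "pos b \<noteq> pos c" "pos a \<noteq> pos c"
    using assms(1-7) unfolding inj_on_def by blast+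
  moreover have "\<not> (pos a < pos c \<and> pos c < pos b) \<and> \<not> (pos b < pos c \<and> pos c < pos a)"
    using assms(3,8) unfolding consecutive_def by blast
  moreover have "\<not> (pos b < pos a \<and> pos a < pos c) \<and> \<not> (pos c < pos a \<and> pos a < pos b)"
    using assms(1,9) unfolding consecutive_def by blast
  moreover have "\<not> (pos a < pos b \<and> pos b < pos c) \<and> \<not> (pos c < pos b \<and> pos b < pos a)"
    using assms(2,10) unfolding consecutive_def by blast
  ultimately show False by linarith
qed

lemma consecutive_Diff_middle:
  assumes "u \<in> Q" "v \<in> Q" "y \<in> Q" "u \<noteq> v" "v \<noteq> y" "u \<noteq> y" "inj_on pos Q"
    and "consecutive Q pos u v" "consecutive Q pos v y"
  shows "consecutive (Q - {v}) pos u y"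
  unfolding consecutive_def
proof
  fix z assume z: "z \<in> Q - {v}"
  have "pos u \<noteq> pos v" "pos v \<noteq> pos y" "pos z \<noteq> pos v"
    using assms(1-7) z unfolding inj_on_def by blast+
  moreover have "\<not> (pos u < pos y \<and> pos y < pos v) \<and> \<not> (pos v < pos y \<and> pos y < pos u)"
    and "\<not> (pos u < pos z \<and> pos z < pos v) \<and> \<not> (pos v < pos z \<and> pos z < pos u)"
    using assms(3,8) z unfolding consecutive_def by blast+
  moreover have "\<not> (pos v < pos u \<and> pos u < pos y) \<and> \<not> (pos y < pos u \<and> pos u < pos v)"
    and "\<not> (pos v < pos z \<and> pos z < pos y) \<and> \<not> (pos y < pos z \<and> pos z < pos v)"
    using assms(1,9) z unfolding consecutive_def by blast+
  ultimately show "\<not> (pos u < pos z \<and> pos z < pos y) \<and> \<not> (pos y < pos z \<and> pos z < pos u)"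
    by linarith
qed

lemma linear_forest_usp_path:
  assumes "wf_graph G" and "usp_path G P"
  obtains pos where "linear_forest G (set P) pos"
proof
  define pos where "pos = the_inv_into {..<length P} ((!) P)"
  have d: "distinct P" "set P \<subseteq> verts G" using assms(2) unfolding usp_path_def is_path_def by auto
  have bij: "bij_betw ((!) P) {..<length P} (set P)" using d(1) by (rule bij_betw_nth) simp_all
  then have pos_nth: "pos (P!i) = i" if "i < length P" for i
    using that unfolding pos_def bij_betw_def by (simp add: the_inv_into_f_f)
  have "inj_on pos (set P)" unfolding pos_def using bij_betw_the_inv_into[OF bij] bij_betw_def by blast
  moreover have "mult G x y \<le> 1 \<and> (mult G x y > 0 \<longrightarrow> consecutive (set P) pos x y)"
    if x: "x \<in> set P" and y: "y \<in> set P" for x y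
  proof -
    obtain i where i: "i < length P" "x = P!i" using x by (auto simp: in_set_conv_nth)
    obtain j where j: "j < length P" "y = P!j" using y by (auto simp: in_set_conv_nth)
    have simple: "mult G (P!k) (P!Suc k) = 1" if "Suc k < length P" for k
      using assms(2) that unfolding usp_path_def by auto
    have cons: "consecutive (set P) pos x y" if "j = Suc i \<or> i = Suc j"
      unfolding consecutive_def
    proof
      fix z
      have "pos x = i" "pos y = j" using i j pos_nth by simp_all
      with that show "\<not> (pos x < pos z \<and> pos z < pos y) \<and> \<not> (pos y < pos z \<and> pos z < pos x)"
        by linarith
    qed
    have sym: "mult G a b = mult G b a" for a b using assms(1) unfolding wf_graph_def by blast
    consider "j = Suc i" | "i = Suc j" | "i = j" | "Suc i < j" | "Suc j < i" by linarith
    then show ?thesis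
    proof cases
      case 1 then show ?thesis using simple i j cons by simp
    next
      case 2 then show ?thesis using simple i j cons sym by simp
    next
      case 3 then show ?thesis using i j assms(1) unfolding wf_graph_def by simp
    next
      case 4 then show ?thesis using usp_path_chordless[OF assms(2) 4 j(1)] i j by simp
    next
      case 5 then show ?thesis using usp_path_chordless[OF assms(2) 5 i(1)] i j sym by simp
    qed
  qed
  ultimately show "linear_forest G (set P) pos" unfolding linear_forest_def using d(2) by blast
qed

lemma linear_forest_contract_Diff:
  assumes L: "linear_forest G Q pos"
  shows "linear_forest (contract G u v) (Q - {u, v}) pos"
proof -
  let ?H = "contract G u v"
  have "mult ?H x y \<le> 1 \<and> (mult ?H x y > 0 \<longrightarrow> consecutive (Q - {u, v}) pos x y)"
    if "x \<in> Q - {u, v}" "y \<in> Q - {u, v}" for x y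
  proof -
    have "mult ?H x y \<le> mult G x y" and "mult ?H x y > 0 \<Longrightarrow> mult G x y > 0"
      using that by (auto simp: contract_def split: if_splits)
    moreover have "mult G x y \<le> 1" and "mult G x y > 0 \<Longrightarrow> consecutive Q pos x y"
      using L that unfolding linear_forest_def by auto
    ultimately show ?thesis using consecutive_subset[of Q pos x y "Q - {u, v}"] by auto
  qed
  moreover have "Q - {u, v} \<subseteq> verts ?H" using L unfolding linear_forest_def contract_def by auto
  moreover have "inj_on pos (Q - {u, v})" using L unfolding linear_forest_def by (auto intro: inj_on_subset)
  ultimately show ?thesis unfolding linear_forest_def by blast
qed

text \<open>Contracting uv merges v into u, so the new edge uy has multiplicity mult G u y + mult G v y.\<close>
lemma linear_forest_merged_edge:
  assumes L: "linear_forest G Q pos" and uv: "u \<in> Q" "v \<in> Q" "u \<noteq> v" "mult G u v > 0"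
    and y: "y \<in> Q" "y \<noteq> u" "y \<noteq> v"
  shows "mult G u y + mult G v y \<le> 1 \<and>
    (mult G u y + mult G v y > 0 \<longrightarrow> consecutive (Q - {v}) pos u y)"
proof -
  have inj: "inj_on pos Q"
    and simple: "\<And>x y. x \<in> Q \<Longrightarrow> y \<in> Q \<Longrightarrow> mult G x y \<le> 1"
    and cons: "\<And>x y. x \<in> Q \<Longrightarrow> y \<in> Q \<Longrightarrow> mult G x y > 0 \<Longrightarrow> consecutive Q pos x y"
    using L unfolding linear_forest_def by auto
  have cons_uv: "consecutive Q pos u v" using cons uv by simp
  have "\<not> (mult G u y > 0 \<and> mult G v y > 0)"
    using consecutive_no_triangle[of u Q v y pos] cons cons_uv uv y inj by blast
  moreover have "mult G u y \<le> 1" "mult G v y \<le> 1" using simple uv y by auto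
  moreover have "consecutive (Q - {v}) pos u y" if "mult G u y > 0"
    using cons[of u y] consecutive_subset that uv y by blast
  moreover have "consecutive (Q - {v}) pos u y" if "mult G v y > 0"
    using consecutive_Diff_middle[of u Q v y pos] cons[of v y] that cons_uv uv y inj by blast
  ultimately show ?thesis by linarith
qed

lemma linear_forest_contract_merge:
  assumes wf: "wf_graph G" and L: "linear_forest G Q pos"
    and uv: "mult G u v = 1" "u \<in> Q" "v \<in> Q"
  shows "linear_forest (contract G u v) (Q - {v}) pos"
proof -
  let ?H = "contract G u v"
  have "u \<noteq> v" using wf uv(1) unfolding wf_graph_def by (metis zero_neq_one)
  have simple: "\<And>x y. x \<in> Q \<Longrightarrow> y \<in> Q \<Longrightarrow> mult G x y \<le> 1"
    and cons: "\<And>x y. x \<in> Q \<Longrightarrow> y \<in> Q \<Longrightarrow> mult G x y > 0 \<Longrightarrow> consecutive Q pos x y"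
    using L unfolding linear_forest_def by auto
  have merged: "mult ?H u y \<le> 1 \<and> (mult ?H u y > 0 \<longrightarrow> consecutive (Q - {v}) pos u y)"
    if "y \<in> Q - {v}" "y \<noteq> u" for y
    using linear_forest_merged_edge[OF L uv(2,3) \<open>u \<noteq> v\<close>, of y] uv(1) that \<open>u \<noteq> v\<close>
    by (simp add: contract_def)
  have sym: "mult ?H x y = mult ?H y x" for x y
    using wf_graph_minor_step[OF minor_step.contr_edge[OF uv(1)] wf] unfolding wf_graph_def by blast
  have "mult ?H x y \<le> 1 \<and> (mult ?H x y > 0 \<longrightarrow> consecutive (Q - {v}) pos x y)"
    if x: "x \<in> Q - {v}" and y: "y \<in> Q - {v}" for x y
  proof -
    consider "x = y" | "x = u" "y \<noteq> u" | "y = u" "x \<noteq> u" | "x \<noteq> u" "y \<noteq> u" "x \<noteq> y" by blast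
    then show ?thesis
    proof cases
      case 1
      then show ?thesis by (simp add: contract_def)
    next
      case 2
      then show ?thesis using merged y by simp
    next
      case 3
      then show ?thesis using merged[OF x] sym consecutive_sym by metis
    next
      case 4
      then have "mult ?H x y = mult G x y" using x y by (simp add: contract_def)
      then show ?thesis using simple cons consecutive_subset x y by (metis Diff_iff Diff_subset)
    qed
  qed
  moreover have "Q - {v} \<subseteq> verts ?H" using L unfolding linear_forest_def contract_def by auto
  moreover have "inj_on pos (Q - {v})" using L unfolding linear_forest_def by (auto intro: inj_on_subset)
  ultimately show ?thesis unfolding linear_forest_def by blast
qed

lemma linear_forest_contract:
  assumes wf: "wf_graph G" and L: "linear_forest G Q pos" and uv: "mult G u v = 1"
  shows "\<exists>Q'. linear_forest (contract G u v) Q' pos \<and>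
    card (verts (contract G u v) - Q') \<le> card (verts G - Q)"
proof -
  let ?H = "contract G u v"
  have fin: "finite (verts G - Q)" using wf unfolding wf_graph_def by simp
  have v: "v \<in> verts G" using uv wf unfolding wf_graph_def by (metis zero_less_one)
  have verts_H: "verts ?H = verts G - {v}" by (simp add: contract_def)
  show ?thesis
  proof (cases "u \<in> Q \<and> v \<in> Q")
    case True
    then have "linear_forest ?H (Q - {v}) pos" using linear_forest_contract_merge[OF wf L uv] by blast
    moreover have "verts ?H - (Q - {v}) \<subseteq> verts G - Q" using verts_H by auto
    ultimately show ?thesis using card_mono[OF fin] by blast
  next
    case False
    have "card (verts ?H - (Q - {u, v})) \<le> card (verts G - Q)"
    proof (cases "u \<in> Q")
      case True
      with False have v_out: "v \<in> verts G - Q" using v by blast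
      have "card (verts ?H - (Q - {u, v})) \<le> card (insert u (verts G - Q - {v}))"
        using fin verts_H by (intro card_mono) auto
      also have "\<dots> \<le> Suc (card (verts G - Q - {v}))"
        using fin by (simp add: card_insert_if)
      also have "\<dots> = card (verts G - Q)"
        using fin v_out by (rule card_Suc_Diff1)
      finally show ?thesis .
    next
      case False
      then have "verts ?H - (Q - {u, v}) \<subseteq> verts G - Q" using verts_H by auto
      then show ?thesis using card_mono[OF fin] by blast
    qed
    then show ?thesis using linear_forest_contract_Diff[OF L] by blast
  qed
qed

lemma linear_forest_minor_step:
  assumes step: "minor_step G H" and wf: "wf_graph G" and L: "linear_forest G Q pos"
  shows "\<exists>Q'. linear_forest H Q' pos \<and> card (verts H - Q') \<le> card (verts G - Q)"
  using step
proof cases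
  case (del_vertex v)
  have "consecutive Q pos x y \<Longrightarrow> consecutive (Q - {v}) pos x y" for x y
    using consecutive_subset by blast
  then have "linear_forest H (Q - {v}) pos"
    using L del_vertex unfolding linear_forest_def by (auto intro: inj_on_subset)
  moreover have "verts H - (Q - {v}) \<subseteq> verts G - Q" using del_vertex by auto
  moreover have "finite (verts G - Q)" using wf unfolding wf_graph_def by simp
  ultimately show ?thesis using card_mono by blast
next
  case (del_edge u v)
  then have "linear_forest H Q pos"
    using L unfolding linear_forest_def by (auto intro: le_trans[OF diff_le_self])
  then show ?thesis using del_edge by auto
next
  case (contr_edge u v)
  then show ?thesis using linear_forest_contract[OF wf L] by simp
qed

lemma linear_forest_minor_steps:
  assumes "minor_step\<^sup>*\<^sup>* G H" and "wf_graph G" and "linear_forest G Q pos"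
  shows "\<exists>Q'. linear_forest H Q' pos \<and> card (verts H - Q') \<le> card (verts G - Q)"
  using assms(1)
proof (induction rule: rtranclp_induct)
  case (step H H')
  then obtain Q' where "linear_forest H Q' pos" and le: "card (verts H - Q') \<le> card (verts G - Q)"
    by blast
  moreover have "wf_graph H" using step(1) assms(2) by (rule wf_graph_minor_steps)
  ultimately show ?case using linear_forest_minor_step[OF step(2)] le_trans by blast
qed (use assms(3) in blast)

lemma card_linear_forest_saturated_parade:
  assumes "m \<ge> 2" and "saturated_parade m G" and "finite (verts G)" and L: "linear_forest G Q pos"
  shows "card Q \<le> 1"
proof -
  have Q: "Q \<subseteq> verts G" and "\<forall>a\<in>Q. \<forall>b\<in>Q. mult G a b \<le> 1" using L unfolding linear_forest_def by auto
  with assms(1,2) have "\<forall>a\<in>Q. \<forall>b\<in>Q. a = b" unfolding saturated_parade_def by force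
  then show ?thesis using card_le_Suc0_iff_eq[OF finite_subset[OF Q assms(3)]] by simp
qed

lemma iso_refl: "iso G G"
  unfolding iso_def by (rule exI[of _ id]) auto

lemma iso_sym:
  assumes "iso G H"
  shows "iso H G"
proof -
  obtain f where f: "bij_betw f (verts G) (verts H)"
    and mult_f: "\<forall>x\<in>verts G. \<forall>y\<in>verts G. mult H (f x) (f y) = mult G x y"
    using assms unfolding iso_def by blast
  let ?g = "the_inv_into (verts G) f"
  have "bij_betw ?g (verts H) (verts G)" using f by (rule bij_betw_the_inv_into)
  moreover have "mult G (?g a) (?g b) = mult H a b" if "a \<in> verts H" "b \<in> verts H" for a b
    using mult_f that f bij_betwE[OF calculation] f_the_inv_into_f_bij_betw[OF f] by metis
  ultimately show ?thesis unfolding iso_def by blast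
qed

lemma card_verts_iso: "iso G H \<Longrightarrow> card (verts G) = card (verts H)"
  unfolding iso_def using bij_betw_same_card by blast

lemma saturated_parade_iso:
  assumes "iso G H" and "saturated_parade m G"
  shows "saturated_parade m H"
  unfolding saturated_parade_def
proof (intro ballI impI)
  fix a b assume a: "a \<in> verts H" and b: "b \<in> verts H" and "a \<noteq> b"
  obtain f where f: "bij_betw f (verts G) (verts H)"
    and mult_f: "\<forall>x\<in>verts G. \<forall>y\<in>verts G. mult H (f x) (f y) = mult G x y"
    using assms(1) unfolding iso_def by blast
  obtain x y where "x \<in> verts G" "y \<in> verts G" "a = f x" "b = f y"
    using a b f by (metis bij_betw_imp_surj_on imageE)
  with \<open>a \<noteq> b\<close> mult_f assms(2) show "mult H a b = m" unfolding saturated_parade_def by auto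
qed

lemma sp_ge_of_saturated_parade_minor:
  assumes m: "m \<ge> 2" and sat: "saturated_parade m K" and wf: "wf_graph H" and minor: "is_minor K H"
  shows "card (verts K) - 1 \<le> sp H"
proof -
  obtain P where P: "usp_path H P" "usp H = length P" using usp_attained[OF wf] .
  obtain pos where "linear_forest H (set P) pos" using linear_forest_usp_path[OF wf P(1)] .
  moreover obtain G where steps: "minor_step\<^sup>*\<^sup>* H G" and iso: "iso G K"
    using minor unfolding is_minor_def by blast
  ultimately obtain Q where Q: "linear_forest G Q pos" "card (verts G - Q) \<le> card (verts H - set P)"
    using linear_forest_minor_steps wf by blast
  have "card (verts H - set P) = sp H"
    using P wf unfolding usp_path_def is_path_def wf_graph_def sp_def
    by (simp add: card_Diff_subset distinct_card finite_subset)
  moreover have fin: "finite (verts G)" using wf_graph_minor_steps[OF steps wf] unfolding wf_graph_def by simp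
  moreover have "card Q \<le> 1"
    using card_linear_forest_saturated_parade[OF m saturated_parade_iso[OF iso_sym[OF iso] sat] fin Q(1)] .
  moreover have "card (verts G) - card Q \<le> card (verts G - Q)"
    using Q(1) fin unfolding linear_forest_def by (intro diff_card_le_card_Diff) (auto intro: finite_subset)
  ultimately show ?thesis using Q(2) card_verts_iso[OF iso] by linarith
qed

lemma is_minor_refl: "is_minor G G"
  unfolding is_minor_def using iso_refl by blast

lemma sp_floor_saturated_parade:
  assumes "m \<ge> 2" and "wf_graph K" and "saturated_parade m K"
  shows "sp_floor K = card (verts K) - 1"
  unfolding sp_floor_def
proof (rule Least_equality)
  have "sp K = card (verts K) - 1"
    using sp_ge_of_saturated_parade_minor[OF assms(1,3,2) is_minor_refl] sp_le_card_verts_minus_1[OF assms(2)]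
    by simp
  then show "\<exists>H. wf_graph H \<and> is_minor K H \<and> sp H = card (verts K) - 1"
    using assms(2) is_minor_refl by blast
next
  fix k assume "\<exists>H. wf_graph H \<and> is_minor K H \<and> sp H = k"
  then show "card (verts K) - 1 \<le> k" using sp_ge_of_saturated_parade_minor[OF assms(1,3)] by blast
qed

lemma minor_step_delete_edge_toward:
  assumes wf: "wf_graph G" "wf_graph H" and le: "\<And>a b. mult H a b \<le> mult G a b"
    and lt: "mult H x y < mult G x y"
  obtains G' where "minor_step G G'" and "verts G' = verts G" and "\<And>a b. mult H a b \<le> mult G' a b"
    and "(\<Sum>(a, b) \<in> verts G \<times> verts G. mult G' a b - mult H a b)
       < (\<Sum>(a, b) \<in> verts G \<times> verts G. mult G a b - mult H a b)"
proof
  define G' where "G' = \<lparr> verts = verts G,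
    mult = \<lambda>a b. if (a = x \<and> b = y) \<or> (a = y \<and> b = x) then mult G a b - 1 else mult G a b \<rparr>"
  show "minor_step G G'" unfolding G'_def using lt by (intro minor_step.del_edge) simp
  show "verts G' = verts G" unfolding G'_def by simp
  have sym: "mult G a b = mult G b a" "mult H a b = mult H b a" for a b
    using wf unfolding wf_graph_def by blast+
  show "mult H a b \<le> mult G' a b" for a b
    using le[of a b] lt sym unfolding G'_def by auto
  have "mult G x y > 0" using lt by simp
  with wf(1) have xy: "x \<in> verts G" "y \<in> verts G" unfolding wf_graph_def by blast+
  show "(\<Sum>(a, b) \<in> verts G \<times> verts G. mult G' a b - mult H a b)
      < (\<Sum>(a, b) \<in> verts G \<times> verts G. mult G a b - mult H a b)"
  proof (rule sum_strict_mono_ex1)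
    show "finite (verts G \<times> verts G)" using wf(1) unfolding wf_graph_def by simp
    show "\<forall>p \<in> verts G \<times> verts G. (case p of (a, b) \<Rightarrow> mult G' a b - mult H a b)
        \<le> (case p of (a, b) \<Rightarrow> mult G a b - mult H a b)"
      unfolding G'_def by auto
    show "\<exists>p \<in> verts G \<times> verts G. (case p of (a, b) \<Rightarrow> mult G' a b - mult H a b)
        < (case p of (a, b) \<Rightarrow> mult G a b - mult H a b)"
      using xy lt unfolding G'_def by (intro bexI[of _ "(x, y)"]) auto
  qed
qed

lemma minor_steps_delete_edges:
  assumes "wf_graph G" and "wf_graph H" and "verts H = verts G"
    and "\<And>x y. mult H x y \<le> mult G x y"
  shows "minor_step\<^sup>*\<^sup>* G H"
  using assms
proof (induction "\<Sum>(x, y) \<in> verts G \<times> verts G. mult G x y - mult H x y"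
    arbitrary: G rule: less_induct)
  case less
  show ?case
  proof (cases "mult G = mult H")
    case True
    then have "G = H" using less.prems(3) by (intro mgraph.equality) simp_all
    then show ?thesis by simp
  next
    case False
    then obtain x y where "mult G x y \<noteq> mult H x y" by (metis ext)
    with less.prems(4) have lt: "mult H x y < mult G x y" by (simp add: order_less_le)
    obtain G' where step: "minor_step G G'" and verts': "verts G' = verts G"
      and le': "\<And>a b. mult H a b \<le> mult G' a b"
      and decrease: "(\<Sum>(a, b) \<in> verts G \<times> verts G. mult G' a b - mult H a b)
        < (\<Sum>(a, b) \<in> verts G \<times> verts G. mult G a b - mult H a b)"
      using minor_step_delete_edge_toward[OF less.prems(1,2,4) lt] by blast
    have "wf_graph G'" using step less.prems(1) by (rule wf_graph_minor_step)
    then have "minor_step\<^sup>*\<^sup>* G' H"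
      using less.hyps[of G'] decrease less.prems(2,3) verts' le' by simp
    with step show ?thesis by (rule converse_rtranclp_into_rtranclp)
  qed
qed

definition saturated_graph :: "nat \<Rightarrow> nat set \<Rightarrow> mgraph" where
  "saturated_graph m V = \<lparr> verts = V, mult = (\<lambda>x y. if x \<in> V \<and> y \<in> V \<and> x \<noteq> y then m else 0) \<rparr>"

lemma verts_saturated_graph [simp]: "verts (saturated_graph m V) = V"
  by (simp add: saturated_graph_def)

lemma wf_graph_saturated_graph: "finite V \<Longrightarrow> V \<noteq> {} \<Longrightarrow> wf_graph (saturated_graph m V)"
  unfolding wf_graph_def saturated_graph_def by (auto split: if_splits)

lemma saturated_parade_saturated_graph: "saturated_parade m (saturated_graph m V)"
  unfolding saturated_parade_def saturated_graph_def by simp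

lemma is_minor_saturated_graph:
  assumes "wf_graph G" and "\<And>u v. mult G u v \<le> m"
  shows "is_minor G (saturated_graph m (verts G))"
proof -
  have "mult G x y \<le> mult (saturated_graph m (verts G)) x y" for x y
    using assms unfolding wf_graph_def saturated_graph_def by (auto simp: not_less)
  moreover have "wf_graph (saturated_graph m (verts G))"
    by (rule wf_graph_saturated_graph) (use assms(1) in \<open>auto simp: wf_graph_def\<close>)
  ultimately have "minor_step\<^sup>*\<^sup>* (saturated_graph m (verts G)) G"
    using assms(1) by (intro minor_steps_delete_edges) simp_all
  then show ?thesis unfolding is_minor_def using iso_refl by blast
qed

lemma in_class_saturated_parade:
  assumes "m \<ge> 2" and "wf_graph G" and "saturated_parade m G"
  shows "in_class (card (verts G)) m G"
proof -
  have "mult G u v \<le> m" for u v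
    using assms(2,3) unfolding wf_graph_def saturated_parade_def by (metis le0 le_refl not_gr0)
  then show ?thesis unfolding in_class_def using assms sp_floor_saturated_parade by blast
qed

lemma iso_of_saturated_parade_minor:
  assumes sat: "saturated_parade m G" and wf: "wf_graph H"
    and card: "card (verts H) = card (verts G)" and le: "\<And>u v. mult H u v \<le> m"
    and minor: "is_minor G H"
  shows "iso H G"
proof -
  obtain G' where steps: "minor_step\<^sup>*\<^sup>* H G'" and iso: "iso G' G"
    using minor unfolding is_minor_def by blast
  have fin: "finite (verts H)" using wf unfolding wf_graph_def by simp
  have verts: "verts G' = verts H"
    using verts_minor_steps_subset[OF steps] card_verts_iso[OF iso] card fin by (metis card_subset_eq)
  have sat': "saturated_parade m G'" using saturated_parade_iso[OF iso_sym[OF iso] sat] .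
  have "mult H x y = mult G' x y" for x y
  proof (rule antisym)
    show "mult G' x y \<le> mult H x y" using mult_minor_steps_le[OF steps wf verts] .
    show "mult H x y \<le> mult G' x y"
      using le[of x y] sat' wf verts unfolding saturated_parade_def wf_graph_def by (metis le0 not_gr0)
  qed
  then have "H = G'" using verts by (intro mgraph.equality) auto
  with iso show ?thesis by simp
qed

theorem lemma7p5:
  fixes m n :: nat and G :: mgraph
  assumes "m \<ge> 2" and "wf_graph G"
  shows "minor_maximal n m G \<longleftrightarrow> (card (verts G) = n \<and> saturated_parade m G)"
proof
  assume max: "minor_maximal n m G"
  then have n: "card (verts G) = n" and le: "\<And>u v. mult G u v \<le> m"
    unfolding minor_maximal_def in_class_def by auto
  let ?S = "saturated_graph m (verts G)"
  have wf_S: "wf_graph ?S"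
    by (rule wf_graph_saturated_graph) (use assms(2) in \<open>auto simp: wf_graph_def\<close>)
  have "in_class n m ?S"
    using in_class_saturated_parade[OF assms(1) wf_S saturated_parade_saturated_graph] n by simp
  moreover have "is_minor G ?S" using is_minor_saturated_graph[OF assms(2) le] .
  ultimately have "iso ?S G" using max unfolding minor_maximal_def by blast
  then show "card (verts G) = n \<and> saturated_parade m G"
    using n saturated_parade_iso saturated_parade_saturated_graph by blast
next
  assume "card (verts G) = n \<and> saturated_parade m G"
  then have n: "card (verts G) = n" and sat: "saturated_parade m G" by auto
  have "in_class n m G" using in_class_saturated_parade[OF assms sat] n by simp
  moreover have "iso H G" if "in_class n m H" and "is_minor G H" for H
    using that iso_of_saturated_parade_minor[OF sat] n unfolding in_class_def by auto
  ultimately show "minor_maximal n m G" unfolding minor_maximal_def by blast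
qed

end
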